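(* For every nonempty $J\subseteq\{1,\ldots,n\}$, the Laurent polynomial $q_J=t^{-\omega_J}\Delta_J(\tilde tZ)$ lies in $\mathbb{C}[z,t]$; its specialization at $t=0$ is $\pm$ the antidiagonal term of $p_J=\Delta_J(Z)$, its specialization at $t=1$ is $p_J$, and $q_J$ is invariant under the action of the subgroup $U\subseteq B$ of lower triangular unipotent matrices on $M_n\times\mathbb{C}$, i.e. $q_J(\Psi_\tau(u)\cdot Z,\tau)=q_J(Z,\tau)$ for all $u\in U$, $Z\in M_n$, $\tau\in\mathbb{C}$.
   Context: $M_n$ is the space of complex $n\times n$ matrices with coordinate ring $\mathbb{C}[z]=\mathbb{C}[z_{ij}:1\le i,j\le n]$; $Z=(z_{ij})$ is the generic matrix. $\omega_{ij}=3^{\,n-i-j}$ if $i+j\le n$ and $\omega_{ij}=0$ otherwise. $\tilde tZ$ denotes the matrix with entries $t^{\omega_{ij}}z_{ij}$. For $J=\{j_1<\cdots<j_k\}$, $\Delta_J(Z)$ is the minor with rows $1,\ldots,k$ and columns $J$, and $\omega_J=\sum_{r=1}^k\omega_{r,j_{k+1-r}}$ is the sum of the weights along the antidiagonal of the square submatrix of $\omega$ with rows $1,\ldots,k$ and columns $J$. $B$ is the group of invertible lower triangular matrices, acting on $M_n\times\mathbb{C}$ by $b\cdot(Z,\tau)=(\Psi_\tau(b)\cdot Z,\tau)$, where $\Psi_\tau(b)=(\tilde\tau_1^{-1}b\tilde\tau_1,\ldots,\tilde\tau_n^{-1}b\tilde\tau_n)$ with $\tilde\tau_j=\mathrm{diag}(\tau^{\omega_{1j}},\ldots,\tau^{\omega_{nj}})$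 for $\tau\ne0$, and for $\tau=0$, $\Psi_0(b)=(b_1,\ldots,b_n)$ with $b_j$ equal to $b$ with all entries in columns $1,\ldots,n-j$ strictly below the diagonal set to $0$; an $n$-tuple $(g_1,\ldots,g_n)$ of matrices acts on $Z$ columnwise, sending the $j$-th column $Z_j$ to $g_jZ_j$. *)

theory Defs
  imports Complex_Main "HOL-Combinatorics.Permutations"
begin

text \<open>Matrices in M_n are functions nat => nat => complex; only the entries with
  indices in {1..n} are used (1-based indexing as in the paper).\<close>

type_synonym cmat = "nat \<Rightarrow> nat \<Rightarrow> complex"

definition omega :: "nat \<Rightarrow> nat \<Rightarrow> nat \<Rightarrow> nat" where
  "omega n i j = (if i + j \<le> n then 3 ^ (n - i - j) else 0)"

definition jth :: "nat set \<Rightarrow> nat \<Rightarrow> nat" where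
  "jth J r = sorted_list_of_set J ! (r - 1)"

definition ldet :: "nat \<Rightarrow> cmat \<Rightarrow> complex" where
  "ldet k A = (\<Sum>\<sigma> | \<sigma> permutes {1..k}. of_int (sign \<sigma>) * (\<Prod>r\<in>{1..k}. A r (\<sigma> r)))"

definition Delta :: "nat set \<Rightarrow> cmat \<Rightarrow> complex" where
  "Delta J Z = ldet (card J) (\<lambda>r s. Z r (jth J s))"

definition antidiag_term :: "nat set \<Rightarrow> cmat \<Rightarrow> complex" where
  "antidiag_term J Z = (let k = card J; \<rho> = (\<lambda>r. if r \<in> {1..k} then k + 1 - r else r) in
     of_int (sign \<rho>) * (\<Prod>r\<in>{1..k}. Z r (jth J (\<rho> r))))"

definition omegaJ :: "nat \<Rightarrow> nat set \<Rightarrow> nat" where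
  "omegaJ n J = (\<Sum>r\<in>{1..card J}. omega n r (jth J (card J + 1 - r)))"

definition ttilde :: "nat \<Rightarrow> complex \<Rightarrow> cmat \<Rightarrow> cmat" where
  "ttilde n \<tau> Z = (\<lambda>i j. \<tau> ^ omega n i j * Z i j)"

text \<open>Psi_tau(b) = (b_1,...,b_n); Psi n tau b j is the matrix b_j.\<close>
definition Psi :: "nat \<Rightarrow> complex \<Rightarrow> cmat \<Rightarrow> nat \<Rightarrow> cmat" where
  "Psi n \<tau> b j = (if \<tau> \<noteq> 0
     then (\<lambda>i l. inverse (\<tau> ^ omega n i j) * b i l * \<tau> ^ omega n l j)
     else (\<lambda>i l. if l \<le> n - j \<and> l < i then 0 else b i l))"

definition col_act :: "nat \<Rightarrow> (nat \<Rightarrow> cmat) \<Rightarrow> cmat \<Rightarrow> cmat" where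
  "col_act n g Z = (\<lambda>i j. \<Sum>l\<in>{1..n}. g j i l * Z l j)"

definition B_act :: "nat \<Rightarrow> complex \<Rightarrow> cmat \<Rightarrow> cmat \<Rightarrow> cmat" where
  "B_act n \<tau> b Z = col_act n (Psi n \<tau> b) Z"

definition unipotent_lower :: "nat \<Rightarrow> cmat set" where
  "unipotent_lower n = {u. (\<forall>i\<in>{1..n}. u i i = 1) \<and> (\<forall>i\<in>{1..n}. \<forall>l\<in>{1..n}. i < l \<longrightarrow> u i l = 0)}"

text \<open>Polynomial functions on M_n x C, i.e. elements of C[z,t] viewed as functions:
  finite linear combinations of monomials prod z_ij^a_ij * t^e with natural exponents.\<close>
definition poly_fun :: "nat \<Rightarrow> (cmat \<Rightarrow> complex \<Rightarrow> complex) \<Rightarrow> bool" where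
  "poly_fun n f \<longleftrightarrow> (\<exists>(M :: (((nat \<times> nat) \<Rightarrow> nat) \<times> nat) set) c. finite M \<and>
     (\<forall>Z \<tau>. f Z \<tau> = (\<Sum>m\<in>M. c m * (\<Prod>i\<in>{1..n}. \<Prod>j\<in>{1..n}. Z i j ^ fst m (i, j)) * \<tau> ^ snd m)))"

end

theory Submission
  imports Defs "Jordan_Normal_Form.Determinant"
begin

text \<open>
  Expanding \<open>\<Delta>\<^sub>J(\<tilde>tZ)\<close> by Leibniz, the term of a permutation \<open>\<sigma>\<close> carries the power
  \<open>t\<^bsup>W(\<sigma>)\<^esup>\<close>, where \<open>W(\<sigma>)\<close> sums the weights \<open>\<omega>\<close> of the entries it uses. Since
  \<open>\<omega>\<^sub>i\<^sub>j = 3\<^bsup>n-i-j\<^esup>\<close> for \<open>i + j \<le> n\<close>, such a weight exceeds the sum of any two weights on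
  later antidiagonals; an exchange argument then shows that the antidiagonal permutation is the
  unique minimiser of \<open>W\<close>, with minimum \<open>\<omega>\<^sub>J\<close>. Hence \<open>q\<^sub>J\<close> is a polynomial whose value at
  \<open>t = 0\<close> is the antidiagonal term. For \<open>\<tau> \<noteq> 0\<close> the matrix \<open>\<tilde>\<tau>\<close> conjugates the action of
  \<open>\<Psi>\<^sub>\<tau>(u)\<close> into left multiplication by \<open>u\<close>, which fixes minors on the first rows; at \<open>\<tau> = 0\<close>
  the action fixes every entry on or above the antidiagonal, in particular those of the
  antidiagonal term.
\<close>

section \<open>The antidiagonal permutation minimises the weight\<close>

lemma omega_add_less:
  assumes "i + j \<le> n" "i + j < i' + j'" "i + j < i'' + j''"
  shows "omega n i' j' + omega n i'' j'' < omega n i j"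
proof -
  have le: "omega n a b \<le> 3 ^ (n - (i + j) - 1)" if "i + j < a + b" for a b
    using that by (auto simp: omega_def intro: power_increasing)
  show ?thesis
  proof (cases "i + j < n")
    case True
    then have "omega n i j = 3 * 3 ^ (n - (i + j) - 1)"
      by (simp add: omega_def power_Suc[symmetric] Suc_diff_Suc)
    moreover have "(0::nat) < 3 ^ (n - (i + j) - 1)"
      by simp
    ultimately show ?thesis
      using le[OF assms(2)] le[OF assms(3)] by linarith
  next
    case False
    with assms show ?thesis by (simp add: omega_def)
  qed
qed

lemma sum_less_sum_pair:
  fixes f g :: "'a \<Rightarrow> 'b::ordered_cancel_comm_monoid_add"
  assumes "finite A" "a \<in> A" "b \<in> A" "a \<noteq> b"
    and "\<And>x. x \<in> A - {a, b} \<Longrightarrow> f x = g x" and "f a + f b < g a + g b"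
  shows "sum f A < sum g A"
proof -
  have split: "sum h A = h a + h b + sum h (A - {a, b})" for h :: "'a \<Rightarrow> 'b"
  proof -
    have "sum h A = h a + sum h (A - {a})"
      by (rule sum.remove[OF assms(1,2)])
    also have "sum h (A - {a}) = h b + sum h (A - {a} - {b})"
      using assms(1-4) by (intro sum.remove) auto
    finally show ?thesis
      by (simp add: add.assoc Diff_insert2[of A a "{b}"])
  qed
  have "sum f (A - {a, b}) = sum g (A - {a, b})"
    using assms(5) by (rule sum.cong[OF refl])
  with assms(6) show ?thesis
    unfolding split by (simp add: add_strict_right_mono)
qed

lemma strict_mono_on_add_diff_le:
  fixes c :: "nat \<Rightarrow> nat"
  assumes "strict_mono_on {a..b} c" "a \<le> s" "s \<le> t" "t \<le> b"
  shows "c s + (t - s) \<le> c t"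
  using assms(3,4)
proof (induction t rule: dec_induct)
  case (step t)
  then have "c t < c (Suc t)"
    using assms(1,2) by (intro strict_mono_onD[OF assms(1)]) auto
  with step show ?case by (simp add: Suc_diff_le)
qed simp

definition rev_perm :: "nat \<Rightarrow> nat \<Rightarrow> nat" where
  "rev_perm k = (\<lambda>r. if r \<in> {1..k} then k + 1 - r else r)"

lemma rev_perm_permutes: "rev_perm k permutes {1..k}"
proof (rule bij_imp_permutes)
  show "bij_betw (rev_perm k) {1..k} {1..k}"
    by (rule bij_betw_byWitness[where f' = "rev_perm k"]) (auto simp: rev_perm_def)
qed (auto simp: rev_perm_def)

lemma first_row_off_antidiagonal:
  assumes \<sigma>: "\<sigma> permutes {1..k}" and "\<sigma> \<noteq> rev_perm k"
  obtains r0 r' where "r0 \<in> {1..k}" "r' \<in> {1..k}" "r0 < r'"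
    "\<sigma> r0 < k + 1 - r0" "\<sigma> r' = k + 1 - r0"
proof -
  have "\<exists>r. r \<in> {1..k} \<and> \<sigma> r \<noteq> k + 1 - r"
  proof (rule ccontr)
    assume "\<not> ?thesis"
    then have "\<sigma> = rev_perm k"
      using permutes_not_in[OF \<sigma>] by (intro ext) (auto simp: rev_perm_def)
    with assms(2) show False ..
  qed
  then obtain r0 where r0: "r0 \<in> {1..k}" "\<sigma> r0 \<noteq> k + 1 - r0"
    and agree: "\<And>r. r \<in> {1..k} \<Longrightarrow> r < r0 \<Longrightarrow> \<sigma> r = k + 1 - r"
    unfolding exists_least_iff[of "\<lambda>r. r \<in> {1..k} \<and> \<sigma> r \<noteq> k + 1 - r"] by blast
  have \<sigma>r0: "\<sigma> r0 \<in> {1..k}"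
    using permutes_in_image[OF \<sigma>] r0(1) by blast
  have \<sigma>r0_less: "\<sigma> r0 < k + 1 - r0"
  proof (rule ccontr)
    assume "\<not> ?thesis"
    then have r: "k + 1 - \<sigma> r0 < r0" "k + 1 - \<sigma> r0 \<in> {1..k}"
      using r0 \<sigma>r0 by auto
    then have "\<sigma> (k + 1 - \<sigma> r0) = \<sigma> r0"
      using agree[OF r(2,1)] \<sigma>r0 by simp
    then have "k + 1 - \<sigma> r0 = r0"
      using permutes_inj[OF \<sigma>] by (simp add: inj_eq)
    with r show False by simp
  qed
  have "k + 1 - r0 \<in> \<sigma> ` {1..k}"
    unfolding permutes_image[OF \<sigma>] using r0(1) by auto
  then obtain r' where \<sigma>r': "\<sigma> r' = k + 1 - r0" and r': "r' \<in> {1..k}"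
    by (metis imageE)
  have "r' \<noteq> r0"
    using \<sigma>r' r0(2) by auto
  have "r0 < r'"
  proof (rule ccontr)
    assume "\<not> r0 < r'"
    then have "\<sigma> r' = k + 1 - r'"
      using agree r' \<open>r' \<noteq> r0\<close> by simp
    with \<sigma>r' \<open>r' \<noteq> r0\<close> r0(1) r' show False by auto
  qed
  show thesis
    by (rule that[OF r0(1) r' \<open>r0 < r'\<close> \<sigma>r0_less \<sigma>r'])
qed

text \<open>With \<open>c = jth J\<close> this is the exponent of \<open>t\<close> in the Leibniz term of \<open>\<sigma>\<close> in \<open>\<Delta>\<^sub>J(\<tilde>tZ)\<close>.\<close>

definition perm_weight :: "nat \<Rightarrow> (nat \<Rightarrow> nat) \<Rightarrow> nat \<Rightarrow> (nat \<Rightarrow> nat) \<Rightarrow> nat" where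
  "perm_weight n c k \<sigma> = (\<Sum>r\<in>{1..k}. omega n r (c (\<sigma> r)))"

context
  fixes n k :: nat and c :: "nat \<Rightarrow> nat"
  assumes c_strict_mono: "strict_mono_on {1..k} c" and c_le: "\<And>s. s \<in> {1..k} \<Longrightarrow> c s \<le> n"
begin

lemma antidiagonal_le:
  assumes "r \<in> {1..k}"
  shows "r + c (k + 1 - r) \<le> n + 1"
proof -
  have "c (k + 1 - r) + (k - (k + 1 - r)) \<le> c k"
    using assms by (intro strict_mono_on_add_diff_le[OF c_strict_mono]) auto
  with c_le[of k] assms show ?thesis
    by auto
qed

text \<open>
  Let \<open>r\<^sub>0\<close> be the first row where \<open>\<sigma>\<close> leaves the antidiagonal. Composing \<open>\<sigma>\<close> with the
  transposition of \<open>r\<^sub>0\<close> and the row sent to the antidiagonal column of \<open>r\<^sub>0\<close> trades the entry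
  \<open>(r\<^sub>0, c(\<sigma> r\<^sub>0))\<close> for two entries strictly further down-right, so \<open>omega_add_less\<close> applies.
\<close>

lemma perm_weight_exchange:
  assumes \<sigma>: "\<sigma> permutes {1..k}" and "\<sigma> \<noteq> rev_perm k"
  obtains \<sigma>' where "\<sigma>' permutes {1..k}" "perm_weight n c k \<sigma>' < perm_weight n c k \<sigma>"
proof -
  obtain r0 r' where r0: "r0 \<in> {1..k}" and r': "r' \<in> {1..k}" and "r0 < r'"
    and \<sigma>r0_less: "\<sigma> r0 < k + 1 - r0" and \<sigma>r': "\<sigma> r' = k + 1 - r0"
    using first_row_off_antidiagonal[OF assms] .
  have \<sigma>r0: "\<sigma> r0 \<in> {1..k}"
    using permutes_in_image[OF \<sigma>] r0 by blast
  define \<sigma>' where "\<sigma>' = \<sigma> \<circ> Transposition.transpose r0 r'"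
  have "\<sigma>' permutes {1..k}"
    unfolding \<sigma>'_def using r0 r' by (intro permutes_compose[OF permutes_swap_id \<sigma>]) auto
  moreover have "perm_weight n c k \<sigma>' < perm_weight n c k \<sigma>"
    unfolding perm_weight_def
  proof (rule sum_less_sum_pair[of _ r0 r'])
    have "c (\<sigma> r0) < c (k + 1 - r0)"
      using strict_mono_onD[OF c_strict_mono] \<sigma>r0 \<sigma>r0_less r0 by auto
    moreover have "r0 + c (k + 1 - r0) \<le> n + 1"
      using antidiagonal_le r0 by blast
    ultimately have "omega n r0 (c (k + 1 - r0)) + omega n r' (c (\<sigma> r0)) < omega n r0 (c (\<sigma> r0))"
      using \<open>r0 < r'\<close> by (intro omega_add_less) auto
    then show "omega n r0 (c (\<sigma>' r0)) + omega n r' (c (\<sigma>' r')) <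
        omega n r0 (c (\<sigma> r0)) + omega n r' (c (\<sigma> r'))"
      by (simp add: \<sigma>'_def \<sigma>r')
  qed (use r0 r' \<open>r0 < r'\<close> in \<open>auto simp: \<sigma>'_def\<close>)
  ultimately show thesis
    by (rule that)
qed

lemma perm_weight_rev_le:
  "\<sigma> permutes {1..k} \<Longrightarrow> perm_weight n c k (rev_perm k) \<le> perm_weight n c k \<sigma>"
proof (induction "perm_weight n c k \<sigma>" arbitrary: \<sigma> rule: less_induct)
  case less
  show ?case
  proof (cases "\<sigma> = rev_perm k")
    case False
    then obtain \<sigma>' where "\<sigma>' permutes {1..k}" "perm_weight n c k \<sigma>' < perm_weight n c k \<sigma>"
      using perm_weight_exchange[OF less.prems] by blast
    with less.hyps[of \<sigma>'] show ?thesis by simp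
  qed simp
qed

lemma perm_weight_rev_less:
  assumes "\<sigma> permutes {1..k}" "\<sigma> \<noteq> rev_perm k"
  shows "perm_weight n c k (rev_perm k) < perm_weight n c k \<sigma>"
proof -
  obtain \<sigma>' where "\<sigma>' permutes {1..k}" "perm_weight n c k \<sigma>' < perm_weight n c k \<sigma>"
    using perm_weight_exchange[OF assms] by blast
  with perm_weight_rev_le show ?thesis
    by (meson le_less_trans)
qed

end

lemma jth_in:
  assumes "s \<in> {1..card J}"
  shows "jth J s \<in> J"
proof -
  have "finite J"
    using assms by (cases "finite J") auto
  moreover have "s - 1 < length (sorted_list_of_set J)"
    using assms by auto
  then have "sorted_list_of_set J ! (s - 1) \<in> set (sorted_list_of_set J)"
    by (rule nth_mem)
  ultimately show ?thesis
    by (simp add: jth_def)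
qed

lemma strict_mono_on_jth: "strict_mono_on {1..card J} (jth J)"
proof (rule strict_mono_onI)
  fix r s assume "r \<in> {1..card J}" "s \<in> {1..card J}" "r < s"
  then show "jth J r < jth J s"
    unfolding jth_def
    by (intro sorted_wrt_nth_less[where P = "(<)"]) (auto intro: card_ge_0_finite)
qed

lemma jth_le:
  assumes "J \<subseteq> {1..n}" "s \<in> {1..card J}"
  shows "jth J s \<le> n"
  using jth_in[OF assms(2)] assms(1) by auto

lemma omegaJ_eq_perm_weight: "omegaJ n J = perm_weight n (jth J) (card J) (rev_perm (card J))"
  unfolding omegaJ_def perm_weight_def rev_perm_def by (intro sum.cong) auto

section \<open>Leibniz determinants\<close>

lemma sum_permutes_reindex_bij:
  fixes M :: "'b \<Rightarrow> 'b \<Rightarrow> 'c::comm_ring_1"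
  assumes h: "bij_betw h A B" and g: "\<And>x. x \<in> A \<Longrightarrow> g (h x) = x" and "finite A"
  shows "(\<Sum>\<sigma> | \<sigma> permutes B. of_int (sign \<sigma>) * (\<Prod>y\<in>B. M y (\<sigma> y)))
       = (\<Sum>p | p permutes A. of_int (sign p) * (\<Prod>x\<in>A. M (h x) (h (p x))))"
proof -
  have hg: "h (g y) = y" and gB: "g y \<in> A" if "y \<in> B" for y
    using that h g by (auto simp: bij_betw_def)
  have bij_g: "bij_betw g B A"
    using h g hg by (auto simp: bij_betw_def inj_on_def image_iff)
  have finB: "finite B"
    using bij_betw_finite[OF h] \<open>finite A\<close> by simp
  let ?pull = "\<lambda>\<sigma> x. if x \<in> A then g (\<sigma> (h x)) else x"
  let ?push = "\<lambda>p y. if y \<in> B then h (p (g y)) else y"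
  have pull: "?pull \<sigma> permutes A" "sign (?pull \<sigma>) = sign \<sigma>" if "\<sigma> permutes B" for \<sigma>
    using permutes_bij.permutes_p'[of \<sigma> B A g h] permutes_bij_finite.sign_p'[of \<sigma> B A g h]
      that bij_g hg finB by (simp_all add: permutes_bij_def permutes_bij_finite_def
        permutes_bij_finite_axioms_def)
  have push: "?push p permutes B" if "p permutes A" for p
    using permutes_bij.permutes_p'[of p A B h g] that h g
    by (simp add: permutes_bij_def)
  show ?thesis
  proof (rule sum.reindex_bij_witness[where j = ?pull and i = ?push])
    fix \<sigma> assume "\<sigma> \<in> {\<sigma>. \<sigma> permutes B}"
    then have \<sigma>: "\<sigma> permutes B" by simp
    show "?push (?pull \<sigma>) = \<sigma>"
      using permutes_in_image[OF \<sigma>] permutes_not_in[OF \<sigma>] hg gB by (auto intro!: ext)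
    show "?pull \<sigma> \<in> {p. p permutes A}"
      using pull(1)[OF \<sigma>] by simp
    have "(\<Prod>x\<in>A. M (h x) (h (?pull \<sigma> x))) = (\<Prod>x\<in>A. M (h x) (\<sigma> (h x)))"
      using permutes_in_image[OF \<sigma>] h hg by (intro prod.cong) (auto simp: bij_betw_def)
    also have "\<dots> = (\<Prod>y\<in>B. M y (\<sigma> y))"
      by (rule prod.reindex_bij_betw[OF h])
    finally show "of_int (sign (?pull \<sigma>)) * (\<Prod>x\<in>A. M (h x) (h (?pull \<sigma> x)))
        = of_int (sign \<sigma>) * (\<Prod>y\<in>B. M y (\<sigma> y))"
      using pull(2)[OF \<sigma>] by simp
  next
    fix p assume "p \<in> {p. p permutes A}"
    then have p: "p permutes A" by simp
    show "?pull (?push p) = p"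
      using permutes_in_image[OF p] permutes_not_in[OF p] h g by (auto intro!: ext simp: bij_betw_def)
    show "?push p \<in> {\<sigma>. \<sigma> permutes B}"
      using push[OF p] by simp
  qed
qed

lemma ldet_eq_det: "ldet k A = det (mat k k (\<lambda>(i, j). A (Suc i) (Suc j)))"
proof -
  have "bij_betw Suc {0..<k} {1..k}"
    by (simp add: bij_betw_def image_Suc_atLeastLessThan atLeastLessThanSuc_atLeastAtMost)
  then have "ldet k A = (\<Sum>p | p permutes {0..<k}. of_int (sign p) * (\<Prod>i\<in>{0..<k}. A (Suc i) (Suc (p i))))"
    unfolding ldet_def by (rule sum_permutes_reindex_bij[where g = "\<lambda>x. x - 1"]) auto
  also have "\<dots> = det (mat k k (\<lambda>(i, j). A (Suc i) (Suc j)))"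
    unfolding det_def by (auto intro!: sum.cong prod.cong simp: permutes_in_image)
  finally show ?thesis .
qed

lemma ldet_cong:
  assumes "\<And>r s. r \<in> {1..k} \<Longrightarrow> s \<in> {1..k} \<Longrightarrow> A r s = A' r s"
  shows "ldet k A = ldet k A'"
  unfolding ldet_eq_det using assms by (intro arg_cong[where f = det] eq_matI) auto

lemma ldet_mult:
  "ldet k (\<lambda>r s. \<Sum>l\<in>{1..k}. U r l * A l s) = ldet k U * ldet k A"
proof -
  define MU where "MU = mat k k (\<lambda>(i, j). U (Suc i) (Suc j))"
  define MA where "MA = mat k k (\<lambda>(i, j). A (Suc i) (Suc j))"
  have MU: "MU \<in> carrier_mat k k" and MA: "MA \<in> carrier_mat k k"
    by (auto simp: MU_def MA_def)
  have "mat k k (\<lambda>(i, j). \<Sum>l\<in>{1..k}. U (Suc i) l * A l (Suc j)) = MU * MA"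
  proof (rule eq_matI)
    fix i j assume "i < dim_row (MU * MA)" "j < dim_col (MU * MA)"
    then have i: "i < k" and j: "j < k"
      using MU MA by auto
    have "(\<Sum>l\<in>{1..k}. U (Suc i) l * A l (Suc j)) = (\<Sum>l<k. U (Suc i) (Suc l) * A (Suc l) (Suc j))"
      by (simp add: sum.atLeast1_atMost_eq)
    also have "\<dots> = (MU * MA) $$ (i, j)"
      using i j MU MA by (auto simp: MU_def MA_def scalar_prod_def lessThan_atLeast0 intro!: sum.cong)
    finally show "mat k k (\<lambda>(i, j). \<Sum>l\<in>{1..k}. U (Suc i) l * A l (Suc j)) $$ (i, j) = (MU * MA) $$ (i, j)"
      using i j by simp
  qed (use MU MA in auto)
  then show ?thesis
    unfolding ldet_eq_det MU_def MA_def using det_mult[OF MU MA] by (simp add: MU_def MA_def)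
qed

lemma ldet_lower_unitriangular:
  assumes "\<And>r. r \<in> {1..k} \<Longrightarrow> U r r = 1"
    and "\<And>r l. r \<in> {1..k} \<Longrightarrow> l \<in> {1..k} \<Longrightarrow> r < l \<Longrightarrow> U r l = 0"
  shows "ldet k U = 1"
proof -
  define MU where "MU = mat k k (\<lambda>(i, j). U (Suc i) (Suc j))"
  have "det MU = prod_list (diag_mat MU)"
    by (rule det_lower_triangular[where n = k]) (use assms(2) in \<open>auto simp: MU_def\<close>)
  also have "diag_mat MU = replicate k 1"
    using assms(1) by (intro nth_equalityI) (auto simp: diag_mat_def MU_def)
  finally show ?thesis
    by (simp add: ldet_eq_det MU_def)
qed

section \<open>The action of unipotent matrices\<close>

lemma Delta_mult_unipotent:
  assumes J: "J \<subseteq> {1..n}" and u: "u \<in> unipotent_lower n"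
  shows "Delta J (\<lambda>i j. \<Sum>l\<in>{1..n}. u i l * M l j) = Delta J M"
proof -
  have kn: "card J \<le> n"
    using card_mono[OF _ J] by simp
  have "Delta J (\<lambda>i j. \<Sum>l\<in>{1..n}. u i l * M l j)
      = ldet (card J) (\<lambda>r s. \<Sum>l\<in>{1..card J}. u r l * M l (jth J s))"
    unfolding Delta_def
  proof (rule ldet_cong)
    fix r s assume r: "r \<in> {1..card J}"
    show "(\<Sum>l\<in>{1..n}. u r l * M l (jth J s)) = (\<Sum>l\<in>{1..card J}. u r l * M l (jth J s))"
      using u r kn by (intro sum.mono_neutral_right) (auto simp: unipotent_lower_def)
  qed
  also have "\<dots> = ldet (card J) u * Delta J M"
    unfolding Delta_def by (rule ldet_mult)
  also have "ldet (card J) u = 1"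
    using u kn by (intro ldet_lower_unitriangular) (auto simp: unipotent_lower_def)
  finally show ?thesis
    by simp
qed

lemma ttilde_B_act:
  assumes "\<tau> \<noteq> 0"
  shows "ttilde n \<tau> (B_act n \<tau> u Z) = (\<lambda>i j. \<Sum>l\<in>{1..n}. u i l * ttilde n \<tau> Z l j)"
  unfolding ttilde_def B_act_def col_act_def Psi_def using assms
  by (simp add: sum_distrib_left field_simps)

lemma B_act_zero_entry:
  assumes u: "u \<in> unipotent_lower n" and "i \<in> {1..n}" "i + j \<le> n + 1"
  shows "B_act n 0 u Z i j = Z i j"
proof -
  have "B_act n 0 u Z i j = (\<Sum>l\<in>{1..n}. (if l \<le> n - j \<and> l < i then 0 else u i l) * Z l j)"
    by (simp add: B_act_def col_act_def Psi_def)
  also have "\<dots> = (\<Sum>l\<in>{1..n}. if l = i then Z l j else 0)"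
    using assms by (intro sum.cong) (auto simp: unipotent_lower_def)
  also have "\<dots> = Z i j"
    using assms(2) by simp
  finally show ?thesis .
qed

section \<open>Polynomial functions\<close>

lemma poly_fun_add:
  assumes "poly_fun n f" "poly_fun n g"
  shows "poly_fun n (\<lambda>Z \<tau>. f Z \<tau> + g Z \<tau>)"
proof -
  let ?X = "\<lambda>m Z \<tau>. (\<Prod>i\<in>{1..n}. \<Prod>j\<in>{1..n}. (Z :: cmat) i j ^ fst m (i, j)) * (\<tau> :: complex) ^ snd m"
  obtain M1 c1 where M1: "finite M1" and f: "\<And>Z \<tau>. f Z \<tau> = (\<Sum>m\<in>M1. c1 m * ?X m Z \<tau>)"
    using assms(1) unfolding poly_fun_def mult.assoc by blast
  obtain M2 c2 where M2: "finite M2" and g: "\<And>Z \<tau>. g Z \<tau> = (\<Sum>m\<in>M2. c2 m * ?X m Z \<tau>)"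
    using assms(2) unfolding poly_fun_def mult.assoc by blast
  define c where "c m = (if m \<in> M1 then c1 m else 0) + (if m \<in> M2 then c2 m else 0)" for m
  have "f Z \<tau> + g Z \<tau> = (\<Sum>m\<in>M1 \<union> M2. c m * ?X m Z \<tau>)" for Z \<tau>
  proof -
    have "(\<Sum>m\<in>M1 \<union> M2. c m * ?X m Z \<tau>)
        = (\<Sum>m\<in>M1 \<union> M2. if m \<in> M1 then c1 m * ?X m Z \<tau> else 0)
        + (\<Sum>m\<in>M1 \<union> M2. if m \<in> M2 then c2 m * ?X m Z \<tau> else 0)"
      unfolding sum.distrib[symmetric] c_def by (intro sum.cong) (auto simp: distrib_right)
    also have "\<dots> = f Z \<tau> + g Z \<tau>"
      unfolding f g using M1 M2 by (simp add: sum.inter_restrict[symmetric] Int_absorb1)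
    finally show ?thesis ..
  qed
  with M1 M2 show ?thesis
    unfolding poly_fun_def mult.assoc by blast
qed

lemma poly_fun_sum:
  assumes "finite S" "\<And>x. x \<in> S \<Longrightarrow> poly_fun n (f x)"
  shows "poly_fun n (\<lambda>Z \<tau>. \<Sum>x\<in>S. f x Z \<tau>)"
  using assms
proof (induction S rule: finite_induct)
  case empty
  show ?case
    unfolding poly_fun_def by (rule exI[of _ "{}"]) simp
next
  case (insert x F)
  then show ?case
    using poly_fun_add[of n "f x" "\<lambda>Z \<tau>. \<Sum>x\<in>F. f x Z \<tau>"] by simp
qed

lemma poly_fun_monomial:
  assumes "k \<le> n" "\<And>r. r \<in> {1..k} \<Longrightarrow> cl r \<in> {1..n}"
  shows "poly_fun n (\<lambda>Z \<tau>. a * \<tau> ^ d * (\<Prod>r\<in>{1..k}. Z r (cl r)))"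
proof -
  define e where "e = (\<lambda>(i, j). if i \<in> {1..k} \<and> j = cl i then 1 else (0::nat))"
  have row: "(\<Prod>j\<in>{1..n}. Z i j ^ e (i, j)) = (if i \<in> {1..k} then Z i (cl i) else 1)" for Z :: cmat and i
    using assms(2) by (auto simp: e_def if_distrib[of "\<lambda>x. _ ^ x"] prod.delta' cong: if_cong)
  have "(\<Prod>i\<in>{1..n}. \<Prod>j\<in>{1..n}. Z i j ^ e (i, j)) = (\<Prod>r\<in>{1..k}. Z r (cl r))" for Z :: cmat
    unfolding row prod.inter_restrict[symmetric, OF finite_atLeastAtMost]
    using assms(1) by (simp add: Int_absorb1)
  then show ?thesis
    unfolding poly_fun_def
    by (intro exI[of _ "{(e, d)}"] exI[of _ "\<lambda>_. a"]) simp
qed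

section \<open>The polynomial \<open>q\<^sub>J\<close>\<close>

text \<open>The truncated subtraction in the exponent is harmless: \<open>\<omega>\<^sub>J\<close> is the minimal weight.\<close>

definition qJ :: "nat \<Rightarrow> nat set \<Rightarrow> cmat \<Rightarrow> complex \<Rightarrow> complex" where
  "qJ n J Z \<tau> = (\<Sum>\<sigma> | \<sigma> permutes {1..card J}. of_int (sign \<sigma>)
     * \<tau> ^ (perm_weight n (jth J) (card J) \<sigma> - omegaJ n J) * (\<Prod>r\<in>{1..card J}. Z r (jth J (\<sigma> r))))"

lemma omegaJ_le_perm_weight:
  assumes "J \<subseteq> {1..n}" "\<sigma> permutes {1..card J}"
  shows "omegaJ n J \<le> perm_weight n (jth J) (card J) \<sigma>"
  unfolding omegaJ_eq_perm_weight
  using perm_weight_rev_le[OF strict_mono_on_jth jth_le[OF assms(1)] assms(2)] .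

lemma omegaJ_less_perm_weight:
  assumes "J \<subseteq> {1..n}" "\<sigma> permutes {1..card J}" "\<sigma> \<noteq> rev_perm (card J)"
  shows "omegaJ n J < perm_weight n (jth J) (card J) \<sigma>"
  unfolding omegaJ_eq_perm_weight
  using perm_weight_rev_less[OF strict_mono_on_jth jth_le[OF assms(1)] assms(2,3)] .

lemma poly_fun_qJ:
  assumes "J \<subseteq> {1..n}"
  shows "poly_fun n (qJ n J)"
proof -
  have "card J \<le> n"
    using card_mono[OF _ assms] by simp
  moreover have "jth J (\<sigma> r) \<in> {1..n}" if "\<sigma> permutes {1..card J}" "r \<in> {1..card J}" for \<sigma> r
    using jth_in[OF permutes_in_image[OF that(1), THEN iffD2, OF that(2)]] assms by blast
  ultimately show ?thesis
    unfolding qJ_def[abs_def]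
    by (intro poly_fun_sum poly_fun_monomial) (auto simp: finite_permutations)
qed

lemma qJ_eq_Delta_ttilde:
  assumes "J \<subseteq> {1..n}" "\<tau> \<noteq> 0"
  shows "qJ n J Z \<tau> = inverse (\<tau> ^ omegaJ n J) * Delta J (ttilde n \<tau> Z)"
  unfolding Delta_def ldet_def qJ_def sum_distrib_left
proof (rule sum.cong[OF refl])
  fix \<sigma> assume "\<sigma> \<in> {\<sigma>. \<sigma> permutes {1..card J}}"
  then have le: "omegaJ n J \<le> perm_weight n (jth J) (card J) \<sigma>"
    using omegaJ_le_perm_weight[OF assms(1)] by simp
  have "(\<Prod>r\<in>{1..card J}. ttilde n \<tau> Z r (jth J (\<sigma> r)))
      = \<tau> ^ perm_weight n (jth J) (card J) \<sigma> * (\<Prod>r\<in>{1..card J}. Z r (jth J (\<sigma> r)))"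
    by (simp add: ttilde_def perm_weight_def prod.distrib power_sum)
  also have "\<tau> ^ perm_weight n (jth J) (card J) \<sigma>
      = \<tau> ^ (perm_weight n (jth J) (card J) \<sigma> - omegaJ n J) * \<tau> ^ omegaJ n J"
    using le by (simp add: power_add[symmetric])
  finally show "of_int (sign \<sigma>) * \<tau> ^ (perm_weight n (jth J) (card J) \<sigma> - omegaJ n J)
      * (\<Prod>r\<in>{1..card J}. Z r (jth J (\<sigma> r)))
      = inverse (\<tau> ^ omegaJ n J) * (of_int (sign \<sigma>) * (\<Prod>r\<in>{1..card J}. ttilde n \<tau> Z r (jth J (\<sigma> r))))"
    using assms(2) by (simp add: field_simps)
qed

lemma qJ_at_zero:
  assumes "J \<subseteq> {1..n}"
  shows "qJ n J Z 0 = antidiag_term J Z"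
proof -
  let ?\<rho> = "rev_perm (card J)"
  have "qJ n J Z 0 = (\<Sum>\<sigma> | \<sigma> permutes {1..card J}.
      if \<sigma> = ?\<rho> then of_int (sign ?\<rho>) * (\<Prod>r\<in>{1..card J}. Z r (jth J (?\<rho> r))) else 0)"
    unfolding qJ_def using omegaJ_less_perm_weight[OF assms]
    by (intro sum.cong) (auto simp: omegaJ_eq_perm_weight)
  also have "\<dots> = of_int (sign ?\<rho>) * (\<Prod>r\<in>{1..card J}. Z r (jth J (?\<rho> r)))"
    using rev_perm_permutes by (simp add: finite_permutations)
  also have "\<dots> = antidiag_term J Z"
    unfolding antidiag_term_def rev_perm_def Let_def ..
  finally show ?thesis .
qed

lemma qJ_at_one: "qJ n J Z 1 = Delta J Z"
  by (simp add: qJ_def Delta_def ldet_def)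

lemma qJ_B_act:
  assumes J: "J \<subseteq> {1..n}" and u: "u \<in> unipotent_lower n"
  shows "qJ n J (B_act n \<tau> u Z) \<tau> = qJ n J Z \<tau>"
proof (cases "\<tau> = 0")
  case False
  have "Delta J (ttilde n \<tau> (B_act n \<tau> u Z)) = Delta J (ttilde n \<tau> Z)"
    unfolding ttilde_B_act[OF False] by (rule Delta_mult_unipotent[OF J u])
  then show ?thesis
    unfolding qJ_eq_Delta_ttilde[OF J False] by simp
next
  case True
  have "card J \<le> n"
    using card_mono[OF _ J] by simp
  then have "B_act n 0 u Z r (jth J (rev_perm (card J) r)) = Z r (jth J (rev_perm (card J) r))"
    if "r \<in> {1..card J}" for r
    using B_act_zero_entry[OF u] antidiagonal_le[OF strict_mono_on_jth jth_le[OF J] that] that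
    by (simp add: rev_perm_def)
  then have "(\<Prod>r\<in>{1..card J}. B_act n 0 u Z r (jth J (rev_perm (card J) r)))
      = (\<Prod>r\<in>{1..card J}. Z r (jth J (rev_perm (card J) r)))"
    by (rule prod.cong[OF refl])
  then show ?thesis
    unfolding True qJ_at_zero[OF J] antidiag_term_def Let_def rev_perm_def[symmetric] by simp
qed

theorem mainTheorem3:
  fixes n :: nat and J :: "nat set"
  assumes "J \<noteq> {}" and "J \<subseteq> {1..n}"
  shows "\<exists>q. poly_fun n q
     \<and> (\<forall>Z \<tau>. \<tau> \<noteq> 0 \<longrightarrow> q Z \<tau> = inverse (\<tau> ^ omegaJ n J) * Delta J (ttilde n \<tau> Z))
     \<and> (\<exists>\<epsilon>::complex. (\<epsilon> = 1 \<or> \<epsilon> = -1) \<and> (\<forall>Z. q Z 0 = \<epsilon> * antidiag_term J Z))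
     \<and> (\<forall>Z. q Z 1 = Delta J Z)
     \<and> (\<forall>u\<in>unipotent_lower n. \<forall>Z \<tau>. q (B_act n \<tau> u Z) \<tau> = q Z \<tau>)"
proof (intro exI[of _ "qJ n J"] conjI allI impI ballI)
  show "poly_fun n (qJ n J)"
    using assms(2) by (rule poly_fun_qJ)
  show "qJ n J Z \<tau> = inverse (\<tau> ^ omegaJ n J) * Delta J (ttilde n \<tau> Z)" if "\<tau> \<noteq> 0" for Z \<tau>
    using assms(2) that by (rule qJ_eq_Delta_ttilde)
  show "\<exists>\<epsilon>::complex. (\<epsilon> = 1 \<or> \<epsilon> = -1) \<and> (\<forall>Z. qJ n J Z 0 = \<epsilon> * antidiag_term J Z)"
    using qJ_at_zero[OF assms(2)] by auto
  show "qJ n J Z 1 = Delta J Z" for Z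
    by (rule qJ_at_one)
  show "qJ n J (B_act n \<tau> u Z) \<tau> = qJ n J Z \<tau>" if "u \<in> unipotent_lower n" for u Z \<tau>
    using assms(2) that by (rule qJ_B_act)
qed

end
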